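(* In the finite-sum setting, assume $f$ is convex and $L$-smooth with minimizer $x^\ast$, and that $\tilde\nabla_1$ satisfies the strong growth condition with constant $\rho_1\ge1$. Let $K\in\{1,\dots,N\}$, $\bar\rho_K:=\frac{\rho_1(N-K)+(K-1)N}{K(N-1)}$, and run SNAG with batch size $K$ and parameters $s=\frac{1}{L\bar\rho_K}$, $\eta_n=\frac{1}{L\bar\rho_K^2}\frac{n+1}2$, $\beta=1$, $\alpha_n=\frac{n^2/(n+1)}{2+n^2/(n+1)}$. Then, with $\Delta_K:=\frac{N-K}{N-1}+\frac N{\rho_1}\frac{K-1}{N-1}$, we have $\mathbb{E}[f(x_n)-f^\ast]\le\varepsilon$ as soon as the number of component-gradient evaluations $nK$ satisfies $$nK\ge\Delta_K\,\rho_1\sqrt{\frac{2L}{\varepsilon}}\|x_0-x^\ast\|.$$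
   Context: Finite-sum setting: $N\ge2$, $f_i:\mathbb{R}^d\to\mathbb{R}$ continuously differentiable, $f=\frac1N\sum_if_i$, $f^\ast=\min f$. For $K\in\{1,\dots,N\}$, $B$ is a uniformly random subset of $\{1,\dots,N\}$ of size $K$ and $\tilde\nabla_K(x)=\frac1K\sum_{i\in B}\nabla f_i(x)$; each iteration with batch size $K$ evaluates $K$ gradients $\nabla f_i$. Strong growth condition with constant $\rho_K\ge 1$: $\mathbb{E}\|\tilde\nabla_K(x)\|^2\le\rho_K\|\nabla f(x)\|^2$ for all $x$. SNAG: $x_0=z_0$; $y_n=\alpha_nx_n+(1-\alpha_n)z_n$, $x_{n+1}=y_n-s\tilde\nabla_K(y_n)$, $z_{n+1}=\beta z_n+(1-\beta)y_n-\eta_n\tilde\nabla_K(y_n)$, same batch in both updates of an iteration, independent batches across iterations. *)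

theory Defs
  imports "HOL-Analysis.Analysis" "HOL-Library.FuncSet"
begin

text \<open>Components are indexed by 0..N-1. g i is the gradient of the component f i.\<close>

definition full_obj :: "nat \<Rightarrow> (nat \<Rightarrow> 'a \<Rightarrow> real) \<Rightarrow> 'a \<Rightarrow> real" where
  "full_obj N f x = (1 / real N) * (\<Sum>i<N. f i x)"

definition full_grad :: "nat \<Rightarrow> (nat \<Rightarrow> 'a \<Rightarrow> 'a::real_vector) \<Rightarrow> 'a \<Rightarrow> 'a" where
  "full_grad N g x = (1 / real N) *\<^sub>R (\<Sum>i<N. g i x)"

text \<open>All subsets of {0..N-1} of size K (the support of the uniform batch distribution).\<close>
definition batches :: "nat \<Rightarrow> nat \<Rightarrow> nat set set" where
  "batches N K = {B. B \<subseteq> {..<N} \<and> card B = K}"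

definition batch_grad :: "nat \<Rightarrow> (nat \<Rightarrow> 'a \<Rightarrow> 'a::real_vector) \<Rightarrow> nat set \<Rightarrow> 'a \<Rightarrow> 'a" where
  "batch_grad K g B x = (1 / real K) *\<^sub>R (\<Sum>i\<in>B. g i x)"

definition strong_growth :: "nat \<Rightarrow> (nat \<Rightarrow> 'a \<Rightarrow> 'a::real_inner) \<Rightarrow> nat \<Rightarrow> real \<Rightarrow> bool" where
  "strong_growth N g K \<rho> \<longleftrightarrow>
     (\<forall>x. (\<Sum>B\<in>batches N K. (norm (batch_grad K g B x))\<^sup>2) / real (card (batches N K))
            \<le> \<rho> * (norm (full_grad N g x))\<^sup>2)"

fun snag :: "nat \<Rightarrow> (nat \<Rightarrow> 'a \<Rightarrow> 'a::real_vector) \<Rightarrow> (nat \<Rightarrow> real) \<Rightarrow> real \<Rightarrow> real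
              \<Rightarrow> (nat \<Rightarrow> real) \<Rightarrow> 'a \<Rightarrow> (nat \<Rightarrow> nat set) \<Rightarrow> nat \<Rightarrow> 'a \<times> 'a" where
  "snag K g \<alpha> \<beta> s \<eta> x0 Bs 0 = (x0, x0)"
| "snag K g \<alpha> \<beta> s \<eta> x0 Bs (Suc n) =
     (let (x, z) = snag K g \<alpha> \<beta> s \<eta> x0 Bs n;
          y = \<alpha> n *\<^sub>R x + (1 - \<alpha> n) *\<^sub>R z;
          gr = batch_grad K g (Bs n) y
      in (y - s *\<^sub>R gr, \<beta> *\<^sub>R z + (1 - \<beta>) *\<^sub>R y - \<eta> n *\<^sub>R gr))"

text \<open>Expectation of F(x_n) over n independent uniform batches of size K:
  average over all batch sequences (B_0,...,B_{n-1}).\<close>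
definition snag_expect :: "nat \<Rightarrow> nat \<Rightarrow> (nat \<Rightarrow> 'a \<Rightarrow> 'a::real_vector) \<Rightarrow> ('a \<Rightarrow> real)
     \<Rightarrow> (nat \<Rightarrow> real) \<Rightarrow> real \<Rightarrow> real \<Rightarrow> (nat \<Rightarrow> real) \<Rightarrow> 'a \<Rightarrow> nat \<Rightarrow> real" where
  "snag_expect N K g F \<alpha> \<beta> s \<eta> x0 n =
     (\<Sum>Bs\<in>PiE {..<n} (\<lambda>_. batches N K). F (fst (snag K g \<alpha> \<beta> s \<eta> x0 Bs n)))
       / real (card (PiE {..<n} (\<lambda>_. batches N K)))"

end

theory Submission
  imports Defs
begin

text \<open>
  With \<open>a\<^sub>n = n\<^sup>2 / (4 L \<rho>\<^sup>2)\<close>, the potential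
  \<open>a\<^sub>n (f x\<^sub>n - f\<^sup>*) + \<parallel>z\<^sub>n - x\<^sup>*\<parallel>\<^sup>2 / 2\<close> does not increase in expectation along SNAG,
  provided the mini-batch gradient is unbiased and satisfies the strong growth condition with
  constant \<open>\<rho>\<close>: the descent lemma controls the \<open>x\<close>-step, expanding the square controls the
  \<open>z\<close>-step, and the gradient inequality of convexity at \<open>y\<^sub>n\<close> links both, since
  \<open>z\<^sub>n - x\<^sup>* = (y\<^sub>n - x\<^sup>*) + \<alpha>\<^sub>n/(1-\<alpha>\<^sub>n) (y\<^sub>n - x\<^sub>n)\<close>.
  Counting the batches that contain a given index or pair of indices shows that batches of size
  \<open>K\<close> satisfy the strong growth condition with \<open>\<rho> = \<rho>\<^sub>K\<close> once single components do with \<open>\<rho>\<^sub>1\<close>.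
  Hence \<open>a\<^sub>n E[f x\<^sub>n - f\<^sup>*] \<le> \<parallel>x\<^sub>0 - x\<^sup>*\<parallel>\<^sup>2 / 2\<close>, and since \<open>\<Delta>\<^sub>K \<rho>\<^sub>1 = K \<rho>\<^sub>K\<close> the budget on \<open>nK\<close>
  says exactly that \<open>a\<^sub>n \<epsilon> \<ge> \<parallel>x\<^sub>0 - x\<^sup>*\<parallel>\<^sup>2 / 2\<close>.
\<close>

lemma full_obj_has_derivative:
  assumes "\<forall>i<N. \<forall>x. (f i has_derivative (\<lambda>h. inner (g i x) h)) (at x)"
  shows "(full_obj N f has_derivative (\<lambda>h. inner (full_grad N g x) h)) (at x)"
proof -
  have "((\<lambda>x. \<Sum>i<N. f i x) has_derivative (\<lambda>h. \<Sum>i<N. inner (g i x) h)) (at x)"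
    using assms by (intro has_derivative_sum) auto
  then have "((\<lambda>x. (1 / real N) * (\<Sum>i<N. f i x))
      has_derivative (\<lambda>h. (1 / real N) * (\<Sum>i<N. inner (g i x) h))) (at x)"
    by (rule has_derivative_mult_right)
  then show ?thesis
    unfolding full_obj_def full_grad_def
    by (rule has_derivative_eq_rhs) (auto simp: inner_sum_left)
qed

lemma has_real_derivative_along_line:
  fixes F :: "'a::real_inner \<Rightarrow> real"
  assumes "\<forall>x. (F has_derivative (\<lambda>h. inner (G x) h)) (at x)"
  shows "((\<lambda>t. F (x + t *\<^sub>R d)) has_real_derivative inner (G (x + t *\<^sub>R d)) d) (at t)"
proof -
  have "((\<lambda>t. x + t *\<^sub>R d) has_derivative (\<lambda>h. h *\<^sub>R d)) (at t)"
    by (auto intro!: derivative_eq_intros)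
  then have "((\<lambda>t. F (x + t *\<^sub>R d)) has_derivative (\<lambda>h. inner (G (x + t *\<^sub>R d)) (h *\<^sub>R d))) (at t)"
    using has_derivative_compose assms by blast
  then show ?thesis unfolding has_field_derivative_def
    by (rule has_derivative_eq_rhs) (auto simp: fun_eq_iff)
qed

lemma lipschitz_gradient_upper_bound:
  fixes F :: "'a::real_inner \<Rightarrow> real"
  assumes der: "\<forall>x. (F has_derivative (\<lambda>h. inner (G x) h)) (at x)"
    and lip: "\<forall>x y. norm (G x - G y) \<le> L * norm (x - y)"
  shows "F y \<le> F x + inner (G x) (y - x) + L / 2 * (norm (y - x))\<^sup>2"
proof -
  define d where "d = y - x"
  define \<psi> where "\<psi> t = F (x + t *\<^sub>R d) - t * inner (G x) d - L / 2 * t\<^sup>2 * (norm d)\<^sup>2" for t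
  have D: "(\<psi> has_real_derivative
      (inner (G (x + t *\<^sub>R d)) d - inner (G x) d - L * t * (norm d)\<^sup>2)) (at t)" for t
    unfolding \<psi>_def
    by (rule has_real_derivative_along_line[OF der, THEN DERIV_diff, THEN DERIV_diff, THEN DERIV_cong])
       (auto intro!: derivative_eq_intros simp: power2_eq_square)
  obtain z where z: "0 < z" "z < 1"
    "\<psi> 1 - \<psi> 0 = inner (G (x + z *\<^sub>R d)) d - inner (G x) d - L * z * (norm d)\<^sup>2"
    using MVT2[of 0 1 \<psi>, OF _ D] by auto
  have "inner (G (x + z *\<^sub>R d)) d - inner (G x) d = inner (G (x + z *\<^sub>R d) - G x) d"
    by (simp add: inner_diff_left)
  also have "\<dots> \<le> norm (G (x + z *\<^sub>R d) - G x) * norm d"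
    by (rule norm_cauchy_schwarz)
  also have "\<dots> \<le> L * norm (z *\<^sub>R d) * norm d"
    using lip[rule_format, of "x + z *\<^sub>R d" x] by (intro mult_right_mono) auto
  also have "\<dots> = L * z * (norm d)\<^sup>2"
    using z by (simp add: power2_eq_square)
  finally have "\<psi> 1 \<le> \<psi> 0" using z by simp
  then show ?thesis unfolding \<psi>_def d_def by simp
qed

lemma convex_on_gradient_inequality:
  fixes F :: "'a::real_inner \<Rightarrow> real"
  assumes der: "\<forall>x. (F has_derivative (\<lambda>h. inner (G x) h)) (at x)"
    and cvx: "convex_on UNIV F"
  shows "F y + inner (G y) (w - y) \<le> F w"
proof -
  define d where "d = w - y"
  define h where "h t = F (y + t *\<^sub>R d)" for t
  have "convex_on UNIV h"
  proof (rule convex_onI)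
    fix t a b :: real assume "0 < t" "t < 1"
    have "y + ((1 - t) * a + t * b) *\<^sub>R d = (1 - t) *\<^sub>R (y + a *\<^sub>R d) + t *\<^sub>R (y + b *\<^sub>R d)"
      by (simp add: algebra_simps)
    then show "h ((1 - t) *\<^sub>R a + t *\<^sub>R b) \<le> (1 - t) * h a + t * h b"
      unfolding h_def using convex_onD[OF cvx, of t "y + a *\<^sub>R d" "y + b *\<^sub>R d"] \<open>0 < t\<close> \<open>t < 1\<close>
      by simp
  qed simp
  moreover have "(h has_real_derivative inner (G (y + 0 *\<^sub>R d)) d) (at 0)"
    unfolding h_def by (rule has_real_derivative_along_line[OF der])
  ultimately have "inner (G y) d * (1 - 0) \<le> h 1 - h 0"
    by (intro convex_on_imp_above_tangent) auto
  then show ?thesis unfolding h_def d_def by simp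
qed

lemma finite_batches: "finite (batches N K)"
  unfolding batches_def by (rule finite_subset[of _ "Pow {..<N}"]) auto

lemma card_batches: "card (batches N K) = N choose K"
  unfolding batches_def using n_subsets[of "{..<N}" K] by simp

lemma card_batches_superset:
  assumes A: "A \<subseteq> {..<N}" "card A \<le> K"
  shows "card {B \<in> batches N K. A \<subseteq> B} = (N - card A) choose (K - card A)"
proof -
  have finA: "finite A" using A finite_subset by blast
  let ?C = "{C. C \<subseteq> {..<N} - A \<and> card C = K - card A}"
  have "bij_betw (\<lambda>C. C \<union> A) ?C {B \<in> batches N K. A \<subseteq> B}"
  proof (rule bij_betw_byWitness[where f' = "\<lambda>B. B - A"])
    show "(\<lambda>C. C \<union> A) ` ?C \<subseteq> {B \<in> batches N K. A \<subseteq> B}"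
    proof safe
      fix C assume C: "C \<subseteq> {..<N} - A" "card C = K - card A"
      then have "finite C" using finite_subset by blast
      then have "card (C \<union> A) = K" using C A finA by (subst card_Un_disjoint) auto
      then show "C \<union> A \<in> batches N K" using C A unfolding batches_def by auto
    qed
    show "(\<lambda>B. B - A) ` {B \<in> batches N K. A \<subseteq> B} \<subseteq> ?C"
      using finA by (auto simp: batches_def card_Diff_subset)
  qed auto
  then have "card {B \<in> batches N K. A \<subseteq> B} = card ?C"
    by (simp add: bij_betw_same_card)
  also have "\<dots> = (N - card A) choose (K - card A)"
    using n_subsets[of "{..<N} - A" "K - card A"] A finA by (simp add: card_Diff_subset)
  finally show ?thesis .
qed

lemma card_batches_containing:
  assumes "i < N" "1 \<le> K"
  shows "real (card {B \<in> batches N K. i \<in> B}) = real K / real N * real (N choose K)"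
proof -
  have "card {B \<in> batches N K. i \<in> B} = (N - 1) choose (K - 1)"
    using card_batches_superset[of "{i}" N K] assms by simp
  moreover have "K * (N choose K) = N * ((N - 1) choose (K - 1))"
    using assms by (intro times_binomial_minus1_eq) auto
  then have "real K * real (N choose K) = real N * real ((N - 1) choose (K - 1))"
    by (metis of_nat_mult)
  ultimately show ?thesis using assms by (simp add: field_simps)
qed

lemma card_batches_containing_pair:
  assumes "i < N" "j < N" "i \<noteq> j" "1 \<le> K"
  shows "real (card {B \<in> batches N K. i \<in> B \<and> j \<in> B})
    = real K * (real K - 1) / (real N * (real N - 1)) * real (N choose K)"
proof (cases "K = 1")
  case True
  have "card {i, j} \<le> card B" if "B \<in> batches N K" "i \<in> B" "j \<in> B" for B
    using that finite_subset[of B "{..<N}"] by (intro card_mono) (auto simp: batches_def)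
  then have "{B \<in> batches N K. i \<in> B \<and> j \<in> B} = {}"
    using True assms(3) by (fastforce simp: batches_def)
  then have "card {B \<in> batches N K. i \<in> B \<and> j \<in> B} = 0" by (simp only: card.empty)
  then show ?thesis using True by simp
next
  case False
  have "card {B \<in> batches N K. i \<in> B \<and> j \<in> B} = (N - 2) choose (K - 2)"
    using card_batches_superset[of "{i, j}" N K] assms False by (simp add: numeral_2_eq_2)
  moreover have "K * (N choose K) = N * ((N - 1) choose (K - 1))"
    using assms by (intro times_binomial_minus1_eq) auto
  moreover have "(K - 1) * ((N - 1) choose (K - 1)) = (N - 1) * ((N - 2) choose (K - 2))"
    using times_binomial_minus1_eq[of "K - 1" "N - 1"] assms False by (simp add: numeral_2_eq_2)
  ultimately have "K * (K - 1) * (N choose K) = N * (N - 1) * ((N - 2) choose (K - 2))"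
    by (metis mult.assoc mult.left_commute)
  then have "real (K * (K - 1) * (N choose K)) = real (N * (N - 1) * ((N - 2) choose (K - 2)))"
    by (simp only:)
  then have "real K * (real K - 1) * real (N choose K)
      = real N * (real N - 1) * real ((N - 2) choose (K - 2))"
    using assms by (simp add: of_nat_diff)
  then show ?thesis using \<open>card _ = _\<close> assms by (simp add: field_simps)
qed

lemma sum_batches_sum:
  fixes v :: "nat \<Rightarrow> 'a::real_vector"
  assumes "1 \<le> K"
  shows "(\<Sum>B\<in>batches N K. \<Sum>i\<in>B. v i)
    = (real K / real N * real (N choose K)) *\<^sub>R (\<Sum>i<N. v i)"
proof -
  have "(\<Sum>B\<in>batches N K. \<Sum>i\<in>B. v i) = (\<Sum>B\<in>batches N K. \<Sum>i<N. if i \<in> B then v i else 0)"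
  proof (rule sum.cong[OF refl])
    fix B assume "B \<in> batches N K"
    then have "{..<N} \<inter> B = B" by (auto simp: batches_def)
    then show "(\<Sum>i\<in>B. v i) = (\<Sum>i<N. if i \<in> B then v i else 0)"
      using sum.inter_restrict[of "{..<N}" v B] by simp
  qed
  also have "\<dots> = (\<Sum>i<N. \<Sum>B\<in>batches N K. if i \<in> B then v i else 0)"
    by (rule sum.swap)
  also have "\<dots> = (\<Sum>i<N. real (card {B \<in> batches N K. i \<in> B}) *\<^sub>R v i)"
    by (simp add: sum.inter_filter[OF finite_batches, symmetric] sum_constant_scaleR)
  also have "\<dots> = (\<Sum>i<N. (real K / real N * real (N choose K)) *\<^sub>R v i)"
    using card_batches_containing assms by simp
  finally show ?thesis by (simp add: scaleR_sum_right)
qed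

lemma norm_sum_squared: "(norm (\<Sum>i\<in>A. v i))\<^sup>2 = (\<Sum>i\<in>A. \<Sum>j\<in>A. inner (v i) (v j))"
  unfolding power2_norm_eq_inner inner_sum_left inner_sum_right
  by (rule sum.swap)

lemma sum_batches_norm_sum_squared:
  fixes v :: "nat \<Rightarrow> 'a::real_inner"
  assumes "1 \<le> K" "2 \<le> N"
  shows "(\<Sum>B\<in>batches N K. (norm (\<Sum>i\<in>B. v i))\<^sup>2)
    = real (N choose K) * (real K * (real K - 1) / (real N * (real N - 1)) * (norm (\<Sum>i<N. v i))\<^sup>2
        + real K * (real N - real K) / (real N * (real N - 1)) * (\<Sum>i<N. (norm (v i))\<^sup>2))"
proof -
  define c1 where "c1 = real K / real N * real (N choose K)"
  define c2 where "c2 = real K * (real K - 1) / (real N * (real N - 1)) * real (N choose K)"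
  let ?ip = "\<lambda>i j. inner (v i) (v j)"
  have count: "(\<Sum>B\<in>batches N K. if i \<in> B \<and> j \<in> B then ?ip i j else 0)
      = (if i = j then c1 else c2) * ?ip i j" if "i < N" "j < N" for i j
    using that assms card_batches_containing[of i N K] card_batches_containing_pair[of i N j K]
    by (cases "i = j") (simp_all add: sum.inter_filter[OF finite_batches, symmetric] c1_def c2_def)
  have "(\<Sum>B\<in>batches N K. (norm (\<Sum>i\<in>B. v i))\<^sup>2)
      = (\<Sum>B\<in>batches N K. \<Sum>i<N. \<Sum>j<N. if i \<in> B \<and> j \<in> B then ?ip i j else 0)"
  proof (rule sum.cong[OF refl])
    fix B assume "B \<in> batches N K"
    then have "{..<N} \<inter> B = B" by (auto simp: batches_def)
    have "(\<Sum>i<N. \<Sum>j<N. if i \<in> B \<and> j \<in> B then ?ip i j else 0)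
        = (\<Sum>i<N. if i \<in> B then \<Sum>j<N. if j \<in> B then ?ip i j else 0 else 0)"
      by (intro sum.cong refl) auto
    also have "\<dots> = (\<Sum>i\<in>B. \<Sum>j\<in>B. ?ip i j)"
      using \<open>{..<N} \<inter> B = B\<close> by (simp add: sum.inter_restrict[symmetric])
    finally show "(norm (\<Sum>i\<in>B. v i))\<^sup>2 = (\<Sum>i<N. \<Sum>j<N. if i \<in> B \<and> j \<in> B then ?ip i j else 0)"
      unfolding norm_sum_squared ..
  qed
  also have "\<dots> = (\<Sum>i<N. \<Sum>B\<in>batches N K. \<Sum>j<N. if i \<in> B \<and> j \<in> B then ?ip i j else 0)"
    by (rule sum.swap)
  also have "\<dots> = (\<Sum>i<N. \<Sum>j<N. \<Sum>B\<in>batches N K. if i \<in> B \<and> j \<in> B then ?ip i j else 0)"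
    by (intro sum.cong refl sum.swap)
  also have "\<dots> = (\<Sum>i<N. \<Sum>j<N. (if i = j then c1 else c2) * ?ip i j)"
    using count by (intro sum.cong refl) auto
  also have "\<dots> = (\<Sum>i<N. \<Sum>j<N. c2 * ?ip i j + (if i = j then (c1 - c2) * ?ip i j else 0))"
    by (intro sum.cong refl) (simp add: algebra_simps)
  also have "\<dots> = c2 * (norm (\<Sum>i<N. v i))\<^sup>2 + (c1 - c2) * (\<Sum>i<N. (norm (v i))\<^sup>2)"
    by (simp add: norm_sum_squared sum.distrib sum_distrib_left flip: power2_norm_eq_inner)
  also have "c1 - c2 = real K * (real N - real K) / (real N * (real N - 1)) * real (N choose K)"
    unfolding c1_def c2_def using assms by (simp add: field_simps)
  finally show ?thesis unfolding c2_def by (simp add: algebra_simps)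
qed

lemma sum_batch_grad:
  assumes "1 \<le> K"
  shows "(\<Sum>B\<in>batches N K. batch_grad K g B x) = real (card (batches N K)) *\<^sub>R full_grad N g x"
  using assms
  by (simp add: batch_grad_def full_grad_def card_batches sum_batches_sum flip: scaleR_sum_right)

lemma strong_growth_1_sum_norm:
  assumes "strong_growth N g 1 \<rho>1"
  shows "(\<Sum>i<N. (norm (g i x))\<^sup>2) \<le> real N * \<rho>1 * (norm (full_grad N g x))\<^sup>2"
proof -
  have "batches N 1 = (\<lambda>i. {i}) ` {..<N}"
    unfolding batches_def by (auto simp: card_1_singleton_iff)
  then have "(\<Sum>B\<in>batches N 1. (norm (batch_grad 1 g B x))\<^sup>2) = (\<Sum>i<N. (norm (g i x))\<^sup>2)"
    by (simp add: sum.reindex batch_grad_def)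
  moreover have "card (batches N 1) = N" by (simp add: card_batches)
  ultimately have "(\<Sum>i<N. (norm (g i x))\<^sup>2) / real N \<le> \<rho>1 * (norm (full_grad N g x))\<^sup>2"
    using assms unfolding strong_growth_def by metis
  then show ?thesis
    by (cases "N = 0") (auto simp: field_simps)
qed

definition batch_rho :: "nat \<Rightarrow> nat \<Rightarrow> real \<Rightarrow> real" where
  "batch_rho N K \<rho>1 = (\<rho>1 * (real N - real K) + (real K - 1) * real N) / (real K * (real N - 1))"

lemma strong_growth_batch:
  assumes sgc: "strong_growth N g 1 \<rho>1" and K: "1 \<le> K" "K \<le> N" and N: "2 \<le> N"
  shows "strong_growth N g K (batch_rho N K \<rho>1)"
  unfolding strong_growth_def
proof
  fix x
  define C where "C = real (N choose K)"
  define G where "G = (norm (full_grad N g x))\<^sup>2"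
  define S where "S = (\<Sum>i<N. (norm (g i x))\<^sup>2)"
  define p where "p = real K * (real K - 1) / (real N * (real N - 1))"
  define q where "q = real K * (real N - real K) / (real N * (real N - 1))"
  have C: "C > 0" and q: "q \<ge> 0" using K N by (auto simp: C_def q_def)
  have "(\<Sum>i<N. g i x) = real N *\<^sub>R full_grad N g x"
    unfolding full_grad_def using N by simp
  then have sum_g: "(norm (\<Sum>i<N. g i x))\<^sup>2 = (real N)\<^sup>2 * G"
    unfolding G_def by (simp add: power_mult_distrib)
  have "(\<Sum>B\<in>batches N K. (norm (batch_grad K g B x))\<^sup>2)
      = (1 / real K)\<^sup>2 * (\<Sum>B\<in>batches N K. (norm (\<Sum>i\<in>B. g i x))\<^sup>2)"
    by (simp add: batch_grad_def sum_distrib_left power_divide)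
  also have "\<dots> = (1 / real K)\<^sup>2 * C * (p * ((real N)\<^sup>2 * G) + q * S)"
    using sum_batches_norm_sum_squared[OF K(1) N, of "\<lambda>i. g i x"]
    by (simp add: C_def p_def q_def S_def sum_g)
  also have "\<dots> \<le> (1 / real K)\<^sup>2 * C * (p * ((real N)\<^sup>2 * G) + q * (real N * \<rho>1 * G))"
    using strong_growth_1_sum_norm[OF sgc, of x] C q
    by (intro mult_left_mono add_left_mono) (auto simp: S_def G_def)
  also have "\<dots> = C * batch_rho N K \<rho>1 * G"
    using K N by (simp add: batch_rho_def p_def q_def divide_simps power2_eq_square) algebra
  finally show "(\<Sum>B\<in>batches N K. (norm (batch_grad K g B x))\<^sup>2) / real (card (batches N K))
      \<le> batch_rho N K \<rho>1 * (norm (full_grad N g x))\<^sup>2"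
    using C by (simp add: card_batches C_def G_def field_simps)
qed

lemma batch_rho_ge_1:
  assumes "\<rho>1 \<ge> 1" "1 \<le> K" "K \<le> N" "2 \<le> N"
  shows "batch_rho N K \<rho>1 \<ge> 1"
proof -
  have "real N - real K \<le> \<rho>1 * (real N - real K)"
    using mult_right_mono[of 1 \<rho>1 "real N - real K"] assms by simp
  then show ?thesis using assms by (simp add: batch_rho_def field_simps)
qed

lemma batch_rho_complexity_factor:
  assumes "\<rho>1 > 0" "1 \<le> K" "2 \<le> N"
  shows "((real N - real K) / (real N - 1) + real N / \<rho>1 * ((real K - 1) / (real N - 1))) * \<rho>1
    = real K * batch_rho N K \<rho>1"
proof -
  have "real N - 1 > 0" "real K > 0" using assms by auto
  then show ?thesis using assms(1) by (simp add: batch_rho_def divide_simps)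
qed

lemma gradient_step_potential:
  fixes F :: "'a::real_inner \<Rightarrow> real"
  assumes der: "\<forall>x. (F has_derivative (\<lambda>h. inner (G x) h)) (at x)"
    and lip: "\<forall>x y. norm (G x - G y) \<le> L * norm (x - y)"
    and a': "0 \<le> a'"
  shows "a' * (F (y - s *\<^sub>R v) - F xs) + (norm (z - \<eta> *\<^sub>R v - xs))\<^sup>2 / 2
    \<le> a' * (F y - F xs) + (norm (z - xs))\<^sup>2 / 2 - a' * s * inner (G y) v - \<eta> * inner v (z - xs)
       + (a' * L * s\<^sup>2 + \<eta>\<^sup>2) / 2 * (norm v)\<^sup>2"
proof -
  have "F (y - s *\<^sub>R v) \<le> F y - s * inner (G y) v + L / 2 * s\<^sup>2 * (norm v)\<^sup>2"
    using lipschitz_gradient_upper_bound[OF der lip, of "y - s *\<^sub>R v" y]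
    by (simp add: power_mult_distrib)
  then have "a' * (F (y - s *\<^sub>R v) - F xs) \<le> a' * (F y - s * inner (G y) v + L / 2 * s\<^sup>2 * (norm v)\<^sup>2 - F xs)"
    using a' by (intro mult_left_mono) auto
  moreover have "(norm ((z - xs) - \<eta> *\<^sub>R v))\<^sup>2
      = (norm (z - xs))\<^sup>2 - 2 * \<eta> * inner v (z - xs) + \<eta>\<^sup>2 * (norm v)\<^sup>2"
    unfolding power2_norm_eq_inner
    by (simp add: inner_diff_left inner_diff_right inner_commute power2_eq_square algebra_simps)
  ultimately show ?thesis
    by (simp add: algebra_simps add_divide_distrib)
qed

lemma convex_coupling_bound:
  fixes F :: "'a::real_inner \<Rightarrow> real"
  assumes der: "\<forall>x. (F has_derivative (\<lambda>h. inner (G x) h)) (at x)"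
    and cvx: "convex_on UNIV F" and minim: "\<forall>x. F xs \<le> F x"
    and y: "y = \<alpha> *\<^sub>R x + (1 - \<alpha>) *\<^sub>R z" and \<alpha>: "0 \<le> \<alpha>" "\<alpha> < 1" and \<eta>: "0 \<le> \<eta>"
    and a': "a' \<le> \<eta> / (1 - \<alpha>)" and a: "\<eta> * \<alpha> / (1 - \<alpha>) \<le> a"
  shows "a' * (F y - F xs) - \<eta> * inner (G y) (z - xs) \<le> a * (F x - F xs)"
proof -
  define q where "q = \<alpha> / (1 - \<alpha>)"
  have q: "0 \<le> q" "\<eta> / (1 - \<alpha>) = \<eta> * (1 + q)" "\<eta> * q \<le> a"
    using \<alpha> a unfolding q_def by (auto simp: field_simps)
  have "(1 - \<alpha>) * q = \<alpha>"
    using \<alpha> by (simp add: q_def)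
  have "(1 - \<alpha>) *\<^sub>R ((y - xs) + q *\<^sub>R (y - x)) = (1 - \<alpha>) *\<^sub>R (y - xs) + ((1 - \<alpha>) * q) *\<^sub>R (y - x)"
    by (simp only: scaleR_add_right scaleR_scaleR)
  also have "\<dots> = (1 - \<alpha>) *\<^sub>R (z - xs)"
    unfolding \<open>(1 - \<alpha>) * q = \<alpha>\<close> y by (simp add: algebra_simps)
  finally have "z - xs = (y - xs) + q *\<^sub>R (y - x)"
    using \<alpha> by simp
  then have split: "inner (G y) (z - xs) = inner (G y) (y - xs) + q * inner (G y) (y - x)"
    by (simp only: inner_add_right inner_scaleR_right)
  have tangent_xs: "F y - F xs \<le> inner (G y) (y - xs)"
    and tangent_x: "F y - F x \<le> inner (G y) (y - x)"
    using convex_on_gradient_inequality[OF der cvx, of y xs] convex_on_gradient_inequality[OF der cvx, of y x]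
    by (simp_all add: inner_diff_right)
  have "q * (F y - F x) \<le> q * inner (G y) (y - x)"
    using q tangent_x by (intro mult_left_mono) auto
  then have "(1 + q) * (F y - F xs) - q * (F x - F xs) \<le> inner (G y) (z - xs)"
    using split tangent_xs by (simp add: algebra_simps)
  then have "\<eta> * ((1 + q) * (F y - F xs) - q * (F x - F xs)) \<le> \<eta> * inner (G y) (z - xs)"
    using \<eta> by (rule mult_left_mono)
  moreover have "a' * (F y - F xs) \<le> \<eta> * (1 + q) * (F y - F xs)"
    using a' q minim by (intro mult_right_mono) auto
  moreover have "\<eta> * q * (F x - F xs) \<le> a * (F x - F xs)"
    using q minim by (intro mult_right_mono) auto
  ultimately show ?thesis by (simp add: algebra_simps)
qed

lemma stochastic_step_potential:
  fixes F :: "'a::real_inner \<Rightarrow> real"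
  assumes der: "\<forall>x. (F has_derivative (\<lambda>h. inner (G x) h)) (at x)"
    and lip: "\<forall>x y. norm (G x - G y) \<le> L * norm (x - y)" and L: "0 \<le> L"
    and cvx: "convex_on UNIV F" and minim: "\<forall>x. F xs \<le> F x"
    and unbiased: "(\<Sum>B\<in>P. v B) = real (card P) *\<^sub>R G y"
    and second_moment: "(\<Sum>B\<in>P. (norm (v B))\<^sup>2) \<le> real (card P) * \<rho> * (norm (G y))\<^sup>2"
    and y: "y = \<alpha> *\<^sub>R x + (1 - \<alpha>) *\<^sub>R z" and \<alpha>: "0 \<le> \<alpha>" "\<alpha> < 1" and \<eta>: "0 \<le> \<eta>"
    and a': "0 \<le> a'" "a' \<le> \<eta> / (1 - \<alpha>)" and a: "\<eta> * \<alpha> / (1 - \<alpha>) \<le> a"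
    and step: "(a' * L * s\<^sup>2 + \<eta>\<^sup>2) * \<rho> / 2 \<le> a' * s"
  shows "(\<Sum>B\<in>P. a' * (F (y - s *\<^sub>R v B) - F xs) + (norm (z - \<eta> *\<^sub>R v B - xs))\<^sup>2 / 2)
    \<le> real (card P) * (a * (F x - F xs) + (norm (z - xs))\<^sup>2 / 2)"
proof -
  define C where "C = real (card P)"
  define c where "c = (a' * L * s\<^sup>2 + \<eta>\<^sup>2) / 2"
  define A where "A = a' * (F y - F xs) + (norm (z - xs))\<^sup>2 / 2"
  have c: "0 \<le> c" using a' L by (simp add: c_def)
  have "(\<Sum>B\<in>P. a' * (F (y - s *\<^sub>R v B) - F xs) + (norm (z - \<eta> *\<^sub>R v B - xs))\<^sup>2 / 2)
      \<le> (\<Sum>B\<in>P. A - a' * s * inner (G y) (v B) - \<eta> * inner (v B) (z - xs) + c * (norm (v B))\<^sup>2)"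
    unfolding A_def c_def by (intro sum_mono gradient_step_potential[OF der lip a'(1)])
  also have "\<dots> = C * A - a' * s * inner (G y) (\<Sum>B\<in>P. v B) - \<eta> * inner (\<Sum>B\<in>P. v B) (z - xs)
      + c * (\<Sum>B\<in>P. (norm (v B))\<^sup>2)"
    by (simp add: C_def sum.distrib sum_subtractf inner_sum_left inner_sum_right sum_distrib_left)
  also have "\<dots> \<le> C * (A - \<eta> * inner (G y) (z - xs) + (c * \<rho> - a' * s) * (norm (G y))\<^sup>2)"
    using mult_left_mono[OF second_moment c]
    by (simp add: unbiased C_def power2_norm_eq_inner algebra_simps)
  also have "\<dots> \<le> C * (A - \<eta> * inner (G y) (z - xs))"
    using step by (intro mult_left_mono) (auto simp: C_def c_def mult_nonpos_nonneg)
  also have "\<dots> \<le> C * (a * (F x - F xs) + (norm (z - xs))\<^sup>2 / 2)"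
    using convex_coupling_bound[OF der cvx minim y \<alpha> \<eta> a'(2) a]
    by (intro mult_left_mono) (auto simp: A_def C_def)
  finally show ?thesis unfolding C_def .
qed

lemma sum_PiE_lessThan_Suc:
  "(\<Sum>Bs\<in>PiE {..<Suc n} (\<lambda>_. S). h Bs) = (\<Sum>Bs\<in>PiE {..<n} (\<lambda>_. S). \<Sum>B\<in>S. h (Bs(n := B)))"
proof -
  have "(\<Sum>Bs\<in>PiE {..<Suc n} (\<lambda>_. S). h Bs) = (\<Sum>(B, Bs)\<in>S \<times> PiE {..<n} (\<lambda>_. S). h (Bs(n := B)))"
    unfolding lessThan_Suc PiE_insert_eq
    by (subst sum.reindex[OF inj_combinator]) (auto simp: case_prod_unfold)
  also have "\<dots> = (\<Sum>B\<in>S. \<Sum>Bs\<in>PiE {..<n} (\<lambda>_. S). h (Bs(n := B)))"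
    by (rule sum.cartesian_product[symmetric])
  also have "\<dots> = (\<Sum>Bs\<in>PiE {..<n} (\<lambda>_. S). \<Sum>B\<in>S. h (Bs(n := B)))"
    by (rule sum.swap)
  finally show ?thesis .
qed

lemma snag_prefix_cong:
  "(\<And>m. m < n \<Longrightarrow> Bs m = Bs' m) \<Longrightarrow> snag K g \<alpha> \<beta> s \<eta> x0 Bs n = snag K g \<alpha> \<beta> s \<eta> x0 Bs' n"
proof (induction n)
  case (Suc n)
  then have "snag K g \<alpha> \<beta> s \<eta> x0 Bs n = snag K g \<alpha> \<beta> s \<eta> x0 Bs' n" "Bs n = Bs' n"
    by simp_all
  then show ?case by (simp only: snag.simps)
qed simp

text \<open>Conditions on the step sizes under which the potential
  \<open>a m * (F x\<^sub>m - F x\<^sup>*) + \<parallel>z\<^sub>m - x\<^sup>*\<parallel>\<^sup>2 / 2\<close> of SNAG with \<open>\<beta> = 1\<close> is a supermartingale.\<close>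
definition snag_admissible ::
    "real \<Rightarrow> real \<Rightarrow> real \<Rightarrow> (nat \<Rightarrow> real) \<Rightarrow> (nat \<Rightarrow> real) \<Rightarrow> (nat \<Rightarrow> real) \<Rightarrow> bool" where
  "snag_admissible L \<rho> s \<alpha> \<eta> a \<longleftrightarrow> a 0 = 0 \<and>
     (\<forall>m. 0 \<le> a m \<and> 0 \<le> \<eta> m \<and> 0 \<le> \<alpha> m \<and> \<alpha> m < 1
        \<and> (a (Suc m) * L * s\<^sup>2 + (\<eta> m)\<^sup>2) * \<rho> / 2 \<le> a (Suc m) * s
        \<and> a (Suc m) \<le> \<eta> m / (1 - \<alpha> m) \<and> \<eta> m * \<alpha> m / (1 - \<alpha> m) \<le> a m)"

context
  fixes F :: "'a::real_inner \<Rightarrow> real" and N K :: nat and g :: "nat \<Rightarrow> 'a \<Rightarrow> 'a"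
    and L \<rho> s :: real and \<alpha> \<eta> a :: "nat \<Rightarrow> real" and xs x0 :: 'a
  assumes der: "\<forall>x. (F has_derivative (\<lambda>h. inner (full_grad N g x) h)) (at x)"
    and lip: "\<forall>x y. norm (full_grad N g x - full_grad N g y) \<le> L * norm (x - y)" and L: "0 \<le> L"
    and cvx: "convex_on UNIV F" and minim: "\<forall>x. F xs \<le> F x"
    and K: "1 \<le> K" "K \<le> N" and sgc: "strong_growth N g K \<rho>"
    and adm: "snag_admissible L \<rho> s \<alpha> \<eta> a"
begin

lemma snag_potential_sum:
  "(\<Sum>Bs\<in>PiE {..<m} (\<lambda>_. batches N K). a m * (F (fst (snag K g \<alpha> 1 s \<eta> x0 Bs m)) - F xs)
       + (norm (snd (snag K g \<alpha> 1 s \<eta> x0 Bs m) - xs))\<^sup>2 / 2)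
    \<le> real (card (batches N K)) ^ m * ((norm (x0 - xs))\<^sup>2 / 2)"
proof (induction m)
  case 0
  show ?case using adm by (simp add: snag_admissible_def)
next
  case (Suc m)
  let ?P = "batches N K" and ?snag = "snag K g \<alpha> 1 s \<eta> x0"
  let ?V = "\<lambda>m xz. a m * (F (fst xz) - F xs) + (norm (snd xz - xs))\<^sup>2 / 2"
  have step: "(\<Sum>B\<in>?P. ?V (Suc m) (?snag (Bs(m := B)) (Suc m))) \<le> real (card ?P) * ?V m (?snag Bs m)"
    for Bs
  proof -
    obtain x z where xz: "?snag Bs m = (x, z)" by fastforce
    define y where "y = \<alpha> m *\<^sub>R x + (1 - \<alpha> m) *\<^sub>R z"
    have "?snag (Bs(m := B)) m = (x, z)" for B
      unfolding xz[symmetric] by (rule snag_prefix_cong) simp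
    then have next_iterate: "?snag (Bs(m := B)) (Suc m)
        = (y - s *\<^sub>R batch_grad K g B y, z - \<eta> m *\<^sub>R batch_grad K g B y)" for B
      by (simp add: y_def Let_def)
    have "(\<Sum>B\<in>?P. (norm (batch_grad K g B y))\<^sup>2) / real (card ?P) \<le> \<rho> * (norm (full_grad N g y))\<^sup>2"
      using sgc unfolding strong_growth_def ..
    then have "(\<Sum>B\<in>?P. (norm (batch_grad K g B y))\<^sup>2) \<le> real (card ?P) * \<rho> * (norm (full_grad N g y))\<^sup>2"
      using K by (simp add: card_batches divide_le_eq mult_ac)
    from stochastic_step_potential[OF der lip L cvx minim sum_batch_grad[OF K(1)] this y_def]
    show ?thesis
      using adm unfolding next_iterate xz by (simp add: snag_admissible_def)
  qed
  have "(\<Sum>Bs\<in>PiE {..<Suc m} (\<lambda>_. ?P). ?V (Suc m) (?snag Bs (Suc m)))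
      = (\<Sum>Bs\<in>PiE {..<m} (\<lambda>_. ?P). \<Sum>B\<in>?P. ?V (Suc m) (?snag (Bs(m := B)) (Suc m)))"
    by (rule sum_PiE_lessThan_Suc)
  also have "\<dots> \<le> (\<Sum>Bs\<in>PiE {..<m} (\<lambda>_. ?P). real (card ?P) * ?V m (?snag Bs m))"
    by (rule sum_mono[OF step])
  also have "\<dots> \<le> real (card ?P) ^ Suc m * ((norm (x0 - xs))\<^sup>2 / 2)"
    using mult_left_mono[OF Suc.IH, of "real (card ?P)"] by (simp add: sum_distrib_left)
  finally show ?case .
qed

lemma snag_expect_rate:
  "a m * (snag_expect N K g F \<alpha> 1 s \<eta> x0 m - F xs) \<le> (norm (x0 - xs))\<^sup>2 / 2"
proof -
  let ?\<Pi> = "PiE {..<m} (\<lambda>_. batches N K)" and ?snag = "snag K g \<alpha> 1 s \<eta> x0"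
  define C where "C = real (card (batches N K)) ^ m"
  have C: "C > 0" "real (card ?\<Pi>) = C"
    using K by (simp_all add: C_def card_PiE card_batches)
  have "a m * (snag_expect N K g F \<alpha> 1 s \<eta> x0 m - F xs) = (\<Sum>Bs\<in>?\<Pi>. a m * (F (fst (?snag Bs m)) - F xs)) / C"
    using C by (simp add: snag_expect_def sum_subtractf field_simps flip: sum_distrib_left)
  also have "\<dots> \<le> (\<Sum>Bs\<in>?\<Pi>. a m * (F (fst (?snag Bs m)) - F xs) + (norm (snd (?snag Bs m) - xs))\<^sup>2 / 2) / C"
    using C by (intro divide_right_mono sum_mono) auto
  also have "\<dots> \<le> (norm (x0 - xs))\<^sup>2 / 2"
    using snag_potential_sum[of m] C by (simp add: C_def divide_le_eq mult.commute)
  finally show ?thesis .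
qed

end

lemma snag_schedule_step_conditions:
  fixes t L \<rho> :: real
  assumes t: "t \<ge> 0" and L: "L > 0" and \<rho>: "\<rho> > 0"
  defines "\<alpha> \<equiv> (t ^ 2 / (t + 1)) / (2 + t ^ 2 / (t + 1))"
    and "\<eta> \<equiv> 1 / (L * \<rho>\<^sup>2) * ((t + 1) / 2)"
    and "s \<equiv> 1 / (L * \<rho>)"
    and "a' \<equiv> (t + 1)\<^sup>2 / (4 * L * \<rho>\<^sup>2)"
    and "a \<equiv> t\<^sup>2 / (4 * L * \<rho>\<^sup>2)"
  shows "0 \<le> \<eta>" "0 \<le> \<alpha>" "\<alpha> < 1"
    "(a' * L * s\<^sup>2 + \<eta>\<^sup>2) * \<rho> / 2 \<le> a' * s"
    "a' \<le> \<eta> / (1 - \<alpha>)" "\<eta> * \<alpha> / (1 - \<alpha>) \<le> a"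
proof -
  define u where "u = t ^ 2 / (t + 1)"
  have u: "0 \<le> u" "u * (t + 1) = t ^ 2" unfolding u_def using t by simp_all
  have \<alpha>u: "\<alpha> = u / (2 + u)" "1 - \<alpha> = 2 / (2 + u)"
    unfolding \<alpha>_def u_def[symmetric] using u by (simp_all add: field_simps)
  show "0 \<le> \<eta>" unfolding \<eta>_def using L \<rho> t by simp
  show "0 \<le> \<alpha>" "\<alpha> < 1" unfolding \<alpha>u using u by simp_all
  show "(a' * L * s\<^sup>2 + \<eta>\<^sup>2) * \<rho> / 2 \<le> a' * s"
    unfolding a'_def s_def \<eta>_def using L \<rho> by (simp add: field_simps power2_eq_square)
  have "(t + 1)\<^sup>2 \<le> (t + 1) * (2 + u)"
    using u by (simp add: power2_eq_square algebra_simps)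
  moreover have "\<eta> / (1 - \<alpha>) = (t + 1) * (2 + u) / (4 * L * \<rho>\<^sup>2)"
    unfolding \<alpha>u \<eta>_def using L \<rho> u by (simp add: field_simps)
  ultimately show "a' \<le> \<eta> / (1 - \<alpha>)"
    unfolding a'_def using L \<rho> by (simp add: divide_right_mono)
  have "\<alpha> / (1 - \<alpha>) = u / 2"
    unfolding \<alpha>u using u by (simp add: field_simps)
  then have "\<eta> * \<alpha> / (1 - \<alpha>) = \<eta> * (u / 2)"
    by (metis times_divide_eq_right)
  also have "\<dots> = u * (t + 1) / (4 * L * \<rho>\<^sup>2)"
    unfolding \<eta>_def by (simp add: field_simps)
  finally show "\<eta> * \<alpha> / (1 - \<alpha>) \<le> a"
    unfolding a_def u(2) by simp
qed

lemma snag_schedule_admissible: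
  assumes "L > 0" "\<rho> > 0"
  shows "snag_admissible L \<rho> (1 / (L * \<rho>))
    (\<lambda>m. (real m ^ 2 / (real m + 1)) / (2 + real m ^ 2 / (real m + 1)))
    (\<lambda>m. 1 / (L * \<rho>\<^sup>2) * ((real m + 1) / 2))
    (\<lambda>m. (real m)\<^sup>2 / (4 * L * \<rho>\<^sup>2))"
  using snag_schedule_step_conditions[OF of_nat_0_le_iff assms] assms
  by (simp add: snag_admissible_def add.commute)

lemma le_of_inverse_square_rate:
  fixes t e d L \<rho> \<epsilon> :: real
  assumes "0 < L" "0 < \<rho>" "0 < \<epsilon>" "0 < t" "0 \<le> d" "\<rho> * sqrt (2 * L / \<epsilon>) * d \<le> t"
    and rate: "t\<^sup>2 / (4 * L * \<rho>\<^sup>2) * e \<le> d\<^sup>2 / 2"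
  shows "e \<le> \<epsilon>"
proof (rule ccontr)
  assume "\<not> e \<le> \<epsilon>"
  have "(\<rho> * sqrt (2 * L / \<epsilon>) * d)\<^sup>2 \<le> t\<^sup>2"
    using assms by (intro power_mono) auto
  then have "\<rho>\<^sup>2 * (2 * L / \<epsilon>) * d\<^sup>2 \<le> t\<^sup>2"
    using assms by (simp add: power_mult_distrib)
  then have "d\<^sup>2 / 2 \<le> t\<^sup>2 / (4 * L * \<rho>\<^sup>2) * \<epsilon>"
    using assms by (simp add: field_simps)
  also have "\<dots> < t\<^sup>2 / (4 * L * \<rho>\<^sup>2) * e"
    using assms \<open>\<not> e \<le> \<epsilon>\<close> by (intro mult_strict_left_mono) auto
  finally show False using rate by simp
qed

lemma snag_schedule_complexity:
  fixes F :: "'a::real_inner \<Rightarrow> real"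
  assumes der: "\<forall>x. (F has_derivative (\<lambda>h. inner (full_grad N g x) h)) (at x)"
    and lip: "\<forall>x y. norm (full_grad N g x - full_grad N g y) \<le> L * norm (x - y)" and L: "0 < L"
    and cvx: "convex_on UNIV F" and minim: "\<forall>x. F xs \<le> F x"
    and K: "1 \<le> K" "K \<le> N" and sgc: "strong_growth N g K \<rho>" and \<rho>: "0 < \<rho>" and \<epsilon>: "0 < \<epsilon>"
    and n: "\<rho> * sqrt (2 * L / \<epsilon>) * norm (x0 - xs) \<le> real n"
  shows "snag_expect N K g F (\<lambda>m. (real m ^ 2 / (real m + 1)) / (2 + real m ^ 2 / (real m + 1))) 1
      (1 / (L * \<rho>)) (\<lambda>m. 1 / (L * \<rho>\<^sup>2) * ((real m + 1) / 2)) x0 n - F xs \<le> \<epsilon>"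
proof (cases "n = 0")
  case True
  have "0 < \<rho> * sqrt (2 * L / \<epsilon>)" using \<rho> L \<epsilon> by simp
  then have "norm (x0 - xs) \<le> 0"
    using n True mult_le_cancel_left_pos[of "\<rho> * sqrt (2 * L / \<epsilon>)" _ 0] by simp
  then show ?thesis using True \<epsilon> by (simp add: snag_expect_def)
next
  case False
  note rate = snag_expect_rate[OF der lip less_imp_le[OF L] cvx minim K sgc snag_schedule_admissible[OF L \<rho>]]
  show ?thesis
    using False by (intro le_of_inverse_square_rate[OF L \<rho> \<epsilon> _ norm_ge_zero n rate]) simp
qed

theorem theorem5:
  fixes N K :: nat and f :: "nat \<Rightarrow> 'a::euclidean_space \<Rightarrow> real" and g :: "nat \<Rightarrow> 'a \<Rightarrow> 'a"
    and L \<rho>1 \<epsilon> :: real and xstar x0 :: 'a and n :: nat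
  assumes N2: "N \<ge> 2"
    and grad: "\<forall>i<N. \<forall>x. (f i has_derivative (\<lambda>h. inner (g i x) h)) (at x)"
    and cont: "\<forall>i<N. continuous_on UNIV (g i)"
    and cvx: "convex_on UNIV (full_obj N f)"
    and Lpos: "L > 0"
    and smooth: "\<forall>x y. norm (full_grad N g x - full_grad N g y) \<le> L * norm (x - y)"
    and minim: "\<forall>x. full_obj N f xstar \<le> full_obj N f x"
    and rho1: "\<rho>1 \<ge> 1"
    and sgc: "strong_growth N g 1 \<rho>1"
    and K: "1 \<le> K" "K \<le> N"
    and eps: "\<epsilon> > 0"
    and budget: "real n * real K \<ge>
        ((real N - real K) / (real N - 1) + real N / \<rho>1 * ((real K - 1) / (real N - 1)))
          * \<rho>1 * sqrt (2 * L / \<epsilon>) * norm (x0 - xstar)"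
  shows "let \<rho>K = (\<rho>1 * (real N - real K) + (real K - 1) * real N) / (real K * (real N - 1));
             s = 1 / (L * \<rho>K);
             \<eta> = (\<lambda>m::nat. 1 / (L * \<rho>K\<^sup>2) * ((real m + 1) / 2));
             \<alpha> = (\<lambda>m::nat. (real m ^ 2 / (real m + 1)) / (2 + real m ^ 2 / (real m + 1)))
         in snag_expect N K g (full_obj N f) \<alpha> 1 s \<eta> x0 n - full_obj N f xstar \<le> \<epsilon>"
proof -
  define \<rho> where "\<rho> = batch_rho N K \<rho>1"
  have \<rho>1: "0 < \<rho>1" using rho1 by simp
  have \<rho>: "0 < \<rho>" using batch_rho_ge_1[OF rho1 K N2] by (simp add: \<rho>_def)
  have "real K * (\<rho> * sqrt (2 * L / \<epsilon>) * norm (x0 - xstar)) \<le> real K * real n"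
    using budget[unfolded batch_rho_complexity_factor[OF \<rho>1 K(1) N2]] by (simp add: \<rho>_def ac_simps)
  then have "\<rho> * sqrt (2 * L / \<epsilon>) * norm (x0 - xstar) \<le> real n"
    using K by simp
  from snag_schedule_complexity[OF allI[OF full_obj_has_derivative[OF grad]] smooth Lpos cvx minim K
      strong_growth_batch[OF sgc K N2, folded \<rho>_def] \<rho> eps this]
  show ?thesis unfolding Let_def batch_rho_def[symmetric] \<rho>_def[symmetric] .
qed

end
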